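(* Fix $\alpha\in(0,1]$, $\beta\in[1,\infty)$ and integers $m,n\ge2$. Suppose there is an $\alpha$-envy-free mechanism for the job scheduling problem over the normalized instances $\mathcal{N}$ with $m+1$ machines and $n+1$ jobs whose allocation function gives a $\beta$-approximation to the optimal makespan. Then there is an $\alpha$-envy-free mechanism for the job scheduling problem over the general instances $\mathcal{C}$ with $m$ machines and $n$ jobs whose allocation function gives a $\beta$-approximation to the optimal makespan.
   Context: For $m'$ machines and $n'$ jobs: an instance is $c\in\mathbb{R}_{\ge0}^{m'\times n'}$, $c_i(S)=\sum_{j\in S}c_{i,j}$. General instances $\mathcal{C}=\mathbb{R}_{\ge0}^{m'\times n'}$; normalized instances $\mathcal{N}=\{c\in\mathcal{C}:\exists C,\ c_i([n'])=C\ \forall i\}$. An allocation is a tuple of pairwise disjoint subsets of $[n']$ with union $[n']$. A mechanism $(A,p)$ over $\mathcal{I}$ assigns to each $c$ an allocation $A(c)$ and payments $p(c)\in\mathbb{R}^{m'}$ (written $A_i,p_i$). It is $\alpha$-envy-free ($\alpha\in(0,1]$) if for every $c\in\mathcal{I}$ and all machines $i,j$: $\alpha\, c_i(A_i)-p_i\le c_i(A_j)-p_j$. $\mathrm{OPT}(c)=\min_X\max_i c_i(X_i)$ over allocations $X$; $A$ gives a $\beta$-approximation if $\max_i c_i(A(c)_i)\le\beta\,\mathrm{OPT}(c)$ for all $c\in\mathcal{I}$. *)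

theory Defs
  imports Complex_Main
begin

(* Machines are 0..<m, jobs are 0..<n.  An instance is a cost matrix
   c :: nat => nat => real (c i j = cost of job j on machine i), represented
   canonically: entries outside the m x n range are 0. *)

type_synonym sched_instance = "nat \<Rightarrow> nat \<Rightarrow> real"
type_synonym allocation = "nat \<Rightarrow> nat set"   (* machine i \<mapsto> set of jobs A_i *)
type_synonym payments = "nat \<Rightarrow> real"

definition cost :: "sched_instance \<Rightarrow> nat \<Rightarrow> nat set \<Rightarrow> real" where
  "cost c i S = (\<Sum>j\<in>S. c i j)"

definition general_instances :: "nat \<Rightarrow> nat \<Rightarrow> sched_instance set" where
  "general_instances m n =
     {c. (\<forall>i<m. \<forall>j<n. 0 \<le> c i j) \<and> (\<forall>i j. \<not>(i < m \<and> j < n) \<longrightarrow> c i j = 0)}"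

definition normalized_instances :: "nat \<Rightarrow> nat \<Rightarrow> sched_instance set" where
  "normalized_instances m n =
     {c \<in> general_instances m n. \<exists>C. \<forall>i<m. cost c i {..<n} = C}"

definition is_allocation :: "nat \<Rightarrow> nat \<Rightarrow> allocation \<Rightarrow> bool" where
  "is_allocation m n X \<longleftrightarrow>
     (\<forall>i<m. \<forall>k<m. i \<noteq> k \<longrightarrow> X i \<inter> X k = {}) \<and> (\<Union>i<m. X i) = {..<n}"

definition alpha_envy_free ::
  "real \<Rightarrow> nat \<Rightarrow> sched_instance set \<Rightarrow> (sched_instance \<Rightarrow> allocation) \<Rightarrow> (sched_instance \<Rightarrow> payments) \<Rightarrow> bool" where
  "alpha_envy_free \<alpha> m I A p \<longleftrightarrow>
     (\<forall>c\<in>I. \<forall>i<m. \<forall>j<m. \<alpha> * cost c i (A c i) - p c i \<le> cost c i (A c j) - p c j)"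

definition makespan :: "nat \<Rightarrow> sched_instance \<Rightarrow> allocation \<Rightarrow> real" where
  "makespan m c X = Max ((\<lambda>i. cost c i (X i)) ` {..<m})"

definition OPT :: "nat \<Rightarrow> nat \<Rightarrow> sched_instance \<Rightarrow> real" where
  "OPT m n c = (INF X\<in>{X. is_allocation m n X}. makespan m c X)"

definition is_mechanism ::
  "nat \<Rightarrow> nat \<Rightarrow> sched_instance set \<Rightarrow> (sched_instance \<Rightarrow> allocation) \<Rightarrow> (sched_instance \<Rightarrow> payments) \<Rightarrow> bool" where
  "is_mechanism m n I A p \<longleftrightarrow> (\<forall>c\<in>I. is_allocation m n (A c))"

definition beta_approx ::
  "real \<Rightarrow> nat \<Rightarrow> nat \<Rightarrow> sched_instance set \<Rightarrow> (sched_instance \<Rightarrow> allocation) \<Rightarrow> bool" where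
  "beta_approx \<beta> m n I A \<longleftrightarrow> (\<forall>c\<in>I. makespan m c (A c) \<le> \<beta> * OPT m n c)"

end

theory Submission
  imports Defs
begin

text \<open>Pad a general m \<times> n instance c to a normalized (m+1) \<times> (n+1) instance: a new job n costs
  D minus the row sum on every old machine, and a new machine m costs D/n on every old job and
  nothing on job n, so every row sums to D. With D large enough these new entries exceed
  \<beta> times the optimum, so a \<beta>-approximate allocation of the padded instance must give job n to
  machine m and the old jobs to the old machines. It therefore restricts to an allocation of c,
  on which costs and hence envy-freeness are unchanged, and the optimum does not grow by the
  padding, so the approximation guarantee transfers as well.\<close>

lemma general_instance_nonneg: "c \<in> general_instances m n \<Longrightarrow> 0 \<le> c i j"
  unfolding general_instances_def by (cases "i < m \<and> j < n") auto

lemma cost_nonneg: "c \<in> general_instances m n \<Longrightarrow> 0 \<le> cost c i S"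
  unfolding cost_def by (simp add: sum_nonneg general_instance_nonneg)

lemma entry_le_cost: "c \<in> general_instances m n \<Longrightarrow> finite S \<Longrightarrow> j \<in> S \<Longrightarrow> c i j \<le> cost c i S"
  unfolding cost_def by (rule member_le_sum) (auto simp: general_instance_nonneg)

lemma cost_cong: "(\<And>j. j \<in> S \<Longrightarrow> c i j = c' i j) \<Longrightarrow> cost c i S = cost c' i S"
  unfolding cost_def by (rule sum.cong) auto

lemma is_allocation_subset: "is_allocation m n X \<Longrightarrow> i < m \<Longrightarrow> X i \<subseteq> {..<n}"
  unfolding is_allocation_def by blast

lemma is_allocation_all_to_first: "0 < m \<Longrightarrow> is_allocation m n (\<lambda>i. if i = 0 then {..<n} else {})"
  unfolding is_allocation_def by (auto split: if_splits)

lemma is_allocation_drop_last: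
  assumes Y: "is_allocation (Suc m) (Suc n) Y" and "n \<in> Y m" and last: "Y m \<inter> {..<n} = {}"
  shows "is_allocation m n Y"
proof -
  have disjoint: "Y i \<inter> Y k = {}" if "i < m" "k < m" "i \<noteq> k" for i k
    using Y that unfolding is_allocation_def by simp
  have "Y i \<subseteq> {..<n}" if "i < m" for i
  proof
    fix j assume "j \<in> Y i"
    have "n \<notin> Y i"
      using Y that \<open>n \<in> Y m\<close> unfolding is_allocation_def by (metis disjoint_iff less_Suc_eq less_irrefl_nat)
    then show "j \<in> {..<n}"
      using is_allocation_subset[OF Y, of i] that \<open>j \<in> Y i\<close> by (auto simp: less_Suc_eq)
  qed
  moreover have "{..<n} \<subseteq> (\<Union>i<m. Y i)"
  proof
    fix j assume "j \<in> {..<n}"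
    then have "j \<in> (\<Union>i<Suc m. Y i)"
      using Y unfolding is_allocation_def by simp
    then obtain i where "i < Suc m" "j \<in> Y i"
      by blast
    then show "j \<in> (\<Union>i<m. Y i)"
      using last \<open>j \<in> {..<n}\<close> by (auto simp: less_Suc_eq)
  qed
  ultimately show ?thesis
    unfolding is_allocation_def using disjoint by blast
qed

lemma cost_le_makespan: "i < m \<Longrightarrow> cost c i (X i) \<le> makespan m c X"
  unfolding makespan_def by (rule Max_ge) auto

lemma makespan_le: "0 < m \<Longrightarrow> (\<And>i. i < m \<Longrightarrow> cost c i (X i) \<le> b) \<Longrightarrow> makespan m c X \<le> b"
  unfolding makespan_def by (subst Max_le_iff) auto

lemma makespan_nonneg: "0 < m \<Longrightarrow> c \<in> general_instances m' n \<Longrightarrow> 0 \<le> makespan m c X"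
  using cost_le_makespan[of 0 m c X] cost_nonneg[of c m' n 0 "X 0"] by linarith

lemma allocated_entry_le_makespan:
  assumes "c \<in> general_instances m' n'" "is_allocation m n X" "i < m" "j \<in> X i"
  shows "c i j \<le> makespan m c X"
proof -
  have "finite (X i)"
    using is_allocation_subset[OF assms(2,3)] finite_subset by blast
  then show ?thesis
    using entry_le_cost[OF assms(1) _ assms(4), of i] cost_le_makespan[OF assms(3), of c X] by linarith
qed

lemma OPT_le_makespan:
  "0 < m \<Longrightarrow> c \<in> general_instances m' n' \<Longrightarrow> is_allocation m n X \<Longrightarrow> OPT m n c \<le> makespan m c X"
  unfolding OPT_def by (rule cInf_lower) (auto intro: bdd_belowI[of _ 0] makespan_nonneg)

lemma OPT_greatest:
  "0 < m \<Longrightarrow> (\<And>X. is_allocation m n X \<Longrightarrow> b \<le> makespan m c X) \<Longrightarrow> b \<le> OPT m n c"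
  unfolding OPT_def by (rule cINF_greatest) (auto dest: is_allocation_all_to_first)

definition total_cost :: "nat \<Rightarrow> nat \<Rightarrow> sched_instance \<Rightarrow> real" where
  "total_cost m n c = (\<Sum>i<m. cost c i {..<n})"

lemma total_cost_nonneg: "c \<in> general_instances m n \<Longrightarrow> 0 \<le> total_cost m n c"
  unfolding total_cost_def by (simp add: sum_nonneg cost_nonneg)

lemma row_cost_le_total_cost: "c \<in> general_instances m n \<Longrightarrow> i < m \<Longrightarrow> cost c i {..<n} \<le> total_cost m n c"
  unfolding total_cost_def by (rule member_le_sum) (auto simp: cost_nonneg)

lemma OPT_le_total_cost:
  assumes c: "c \<in> general_instances m n" and "0 < m"
  shows "OPT m n c \<le> total_cost m n c"
proof -
  let ?X = "\<lambda>i. if i = 0 then {..<n} else {}"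
  have "OPT m n c \<le> makespan m c ?X"
    using OPT_le_makespan[OF \<open>0 < m\<close> c is_allocation_all_to_first[OF \<open>0 < m\<close>]] .
  also have "\<dots> \<le> total_cost m n c"
    using row_cost_le_total_cost[OF c] total_cost_nonneg[OF c]
    by (intro makespan_le[OF \<open>0 < m\<close>]) (simp add: cost_def)
  finally show ?thesis .
qed

text \<open>With T the total cost, D = n(\<beta>T + 1) + T makes both D minus a row sum and D/n exceed
  \<beta>T, which bounds \<beta> times the optimum.\<close>

definition padding_weight :: "real \<Rightarrow> nat \<Rightarrow> nat \<Rightarrow> sched_instance \<Rightarrow> real" where
  "padding_weight \<beta> m n c = real n * (\<beta> * total_cost m n c + 1) + total_cost m n c"

definition pad_instance :: "real \<Rightarrow> nat \<Rightarrow> nat \<Rightarrow> sched_instance \<Rightarrow> sched_instance" where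
  "pad_instance \<beta> m n c = (\<lambda>i j.
      if i < m \<and> j < n then c i j
      else if i < m \<and> j = n then padding_weight \<beta> m n c - cost c i {..<n}
      else if i = m \<and> j < n then padding_weight \<beta> m n c / real n
      else 0)"

lemma cost_pad_instance:
  "i < m \<Longrightarrow> S \<subseteq> {..<n} \<Longrightarrow> cost (pad_instance \<beta> m n c) i S = cost c i S"
  by (rule cost_cong) (auto simp: pad_instance_def)

context
  fixes \<beta> :: real and m n :: nat and c :: sched_instance
  assumes c: "c \<in> general_instances m n" and \<beta>: "0 \<le> \<beta>" and n: "0 < n"
begin

lemma new_machine_entry_gt: "j < n \<Longrightarrow> \<beta> * total_cost m n c < pad_instance \<beta> m n c m j"
proof -
  assume "j < n"
  have "padding_weight \<beta> m n c / real n = \<beta> * total_cost m n c + 1 + total_cost m n c / real n"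
    using n by (simp add: padding_weight_def field_simps)
  moreover have "0 \<le> total_cost m n c / real n"
    using total_cost_nonneg[OF c] by simp
  ultimately show ?thesis
    using \<open>j < n\<close> by (simp add: pad_instance_def)
qed

lemma new_job_entry_gt: "i < m \<Longrightarrow> \<beta> * total_cost m n c < pad_instance \<beta> m n c i n"
proof -
  assume "i < m"
  have "\<beta> * total_cost m n c + 1 \<le> real n * (\<beta> * total_cost m n c + 1)"
    using n \<beta> total_cost_nonneg[OF c] mult_right_mono[of 1 "real n" "\<beta> * total_cost m n c + 1"]
    by simp
  then show ?thesis
    using row_cost_le_total_cost[OF c \<open>i < m\<close>] \<open>i < m\<close>
    by (simp add: pad_instance_def padding_weight_def)
qed

lemma pad_instance_normalized: "pad_instance \<beta> m n c \<in> normalized_instances (m+1) (n+1)"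
proof -
  have "0 \<le> \<beta> * total_cost m n c"
    using \<beta> total_cost_nonneg[OF c] by simp
  then have "0 \<le> pad_instance \<beta> m n c i j" for i j
    using new_machine_entry_gt[of j] new_job_entry_gt[of i] general_instance_nonneg[OF c, of i j]
    by (cases "i < m"; cases "j < n") (auto simp: pad_instance_def)
  moreover have "cost (pad_instance \<beta> m n c) i {..<n+1} = padding_weight \<beta> m n c" if "i < m+1" for i
    using that n cost_pad_instance[of i m "{..<n}" n \<beta> c]
    by (auto simp: less_Suc_eq cost_def pad_instance_def)
  ultimately show ?thesis
    unfolding normalized_instances_def general_instances_def by (auto simp: pad_instance_def)
qed

lemma pad_instance_general: "pad_instance \<beta> m n c \<in> general_instances (m+1) (n+1)"
  using pad_instance_normalized unfolding normalized_instances_def by blast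

lemma OPT_pad_instance_le:
  assumes "0 < m"
  shows "OPT (m+1) (n+1) (pad_instance \<beta> m n c) \<le> OPT m n c"
proof (rule OPT_greatest[OF \<open>0 < m\<close>])
  fix X assume X: "is_allocation m n X"
  let ?c = "pad_instance \<beta> m n c"
  define X' where "X' = (\<lambda>i. if i < m then X i else if i = m then {n} else {})"
  have "(\<Union>i<m+1. X' i) = (\<Union>i<m. X i) \<union> {n}"
    unfolding X'_def by (auto simp: less_Suc_eq)
  then have "is_allocation (m+1) (n+1) X'"
    using X is_allocation_subset[OF X]
    unfolding is_allocation_def X'_def by (auto simp: less_Suc_eq disjoint_iff)
  then have "OPT (m+1) (n+1) ?c \<le> makespan (m+1) ?c X'"
    using OPT_le_makespan pad_instance_general by simp
  also have "\<dots> \<le> makespan m c X"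
  proof (rule makespan_le)
    fix i assume "i < m+1"
    then consider "i < m" | "i = m" by linarith
    then show "cost ?c i (X' i) \<le> makespan m c X"
    proof cases
      case 1
      then show ?thesis
        using cost_pad_instance[OF 1 is_allocation_subset[OF X 1]] cost_le_makespan[OF 1]
        by (simp add: X'_def)
    next
      case 2
      then show ?thesis
        using makespan_nonneg[OF \<open>0 < m\<close> c] by (simp add: X'_def cost_def pad_instance_def)
    qed
  qed simp
  finally show "OPT (m+1) (n+1) ?c \<le> makespan m c X" .
qed

lemma approximate_allocation_of_pad_instance:
  assumes "0 < m" and Y: "is_allocation (m+1) (n+1) Y"
    and approx: "makespan (m+1) (pad_instance \<beta> m n c) Y \<le> \<beta> * OPT (m+1) (n+1) (pad_instance \<beta> m n c)"
  shows "is_allocation m n Y" and "makespan m c Y \<le> \<beta> * OPT m n c"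
    and "\<And>i j. i < m \<Longrightarrow> j < m \<Longrightarrow> cost (pad_instance \<beta> m n c) i (Y j) = cost c i (Y j)"
proof -
  let ?c = "pad_instance \<beta> m n c"
  have OPT_pad: "OPT (m+1) (n+1) ?c \<le> OPT m n c"
    using OPT_pad_instance_le[OF \<open>0 < m\<close>] .
  have "makespan (m+1) ?c Y \<le> \<beta> * total_cost m n c"
    using approx mult_left_mono[OF order.trans[OF OPT_pad OPT_le_total_cost[OF c \<open>0 < m\<close>]] \<beta>]
    by linarith
  then have cheap: "?c i j \<le> \<beta> * total_cost m n c" if "i < m+1" "j \<in> Y i" for i j
    using allocated_entry_le_makespan[OF pad_instance_general Y that] by linarith
  have "n \<in> (\<Union>i<m+1. Y i)"
    using Y unfolding is_allocation_def by simp
  then obtain k where "k < m+1" "n \<in> Y k"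
    by blast
  moreover have "\<not> k < m"
    using cheap[OF \<open>k < m+1\<close> \<open>n \<in> Y k\<close>] new_job_entry_gt[of k] by linarith
  ultimately have "n \<in> Y m"
    by (simp add: less_Suc_eq)
  moreover have "j \<notin> Y m" if "j < n" for j
    using cheap[of m j] new_machine_entry_gt[OF that] by linarith
  then have "Y m \<inter> {..<n} = {}"
    by blast
  ultimately show alloc: "is_allocation m n Y"
    using is_allocation_drop_last Y by simp
  show cost_eq: "\<And>i j. i < m \<Longrightarrow> j < m \<Longrightarrow> cost ?c i (Y j) = cost c i (Y j)"
    using cost_pad_instance is_allocation_subset[OF alloc] by blast
  have "makespan m c Y \<le> makespan (m+1) ?c Y"
  proof (rule makespan_le[OF \<open>0 < m\<close>])
    fix i assume "i < m"
    then show "cost c i (Y i) \<le> makespan (m+1) ?c Y"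
      using cost_eq[of i i] cost_le_makespan[of i "m+1" ?c Y] by simp
  qed
  also have "\<dots> \<le> \<beta> * OPT m n c"
    using approx mult_left_mono[OF OPT_pad \<beta>] by linarith
  finally show "makespan m c Y \<le> \<beta> * OPT m n c" .
qed

end

theorem mainTheorem10:
  fixes \<alpha> \<beta> :: real and m n :: nat
  assumes "0 < \<alpha>" "\<alpha> \<le> 1" "1 \<le> \<beta>" "2 \<le> m" "2 \<le> n"
    and "\<exists>A p. is_mechanism (m+1) (n+1) (normalized_instances (m+1) (n+1)) A p
              \<and> alpha_envy_free \<alpha> (m+1) (normalized_instances (m+1) (n+1)) A p
              \<and> beta_approx \<beta> (m+1) (n+1) (normalized_instances (m+1) (n+1)) A"
  shows "\<exists>A p. is_mechanism m n (general_instances m n) A p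
              \<and> alpha_envy_free \<alpha> m (general_instances m n) A p
              \<and> beta_approx \<beta> m n (general_instances m n) A"
proof -
  obtain A p where mech: "is_mechanism (m+1) (n+1) (normalized_instances (m+1) (n+1)) A p"
    and ef: "alpha_envy_free \<alpha> (m+1) (normalized_instances (m+1) (n+1)) A p"
    and approx: "beta_approx \<beta> (m+1) (n+1) (normalized_instances (m+1) (n+1)) A"
    using assms(6) by blast
  have "0 < m" "0 < n" "0 \<le> \<beta>" using assms by auto
  define E where "E = pad_instance \<beta> m n"
  have normalized: "E c \<in> normalized_instances (m+1) (n+1)" if "c \<in> general_instances m n" for c
    using pad_instance_normalized[OF that \<open>0 \<le> \<beta>\<close> \<open>0 < n\<close>] by (simp add: E_def)
  note restrict = approximate_allocation_of_pad_instance[OF _ \<open>0 \<le> \<beta>\<close> \<open>0 < n\<close> \<open>0 < m\<close>,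
      folded E_def]
  have alloc: "is_allocation (m+1) (n+1) (A (E c))"
    and bound: "makespan (m+1) (E c) (A (E c)) \<le> \<beta> * OPT (m+1) (n+1) (E c)"
    if "c \<in> general_instances m n" for c
    using mech approx normalized[OF that] unfolding is_mechanism_def beta_approx_def by blast+
  have "is_mechanism m n (general_instances m n) (\<lambda>c. A (E c)) (\<lambda>c. p (E c))"
    using restrict(1)[OF _ alloc bound] unfolding is_mechanism_def by blast
  moreover have "beta_approx \<beta> m n (general_instances m n) (\<lambda>c. A (E c))"
    using restrict(2)[OF _ alloc bound] unfolding beta_approx_def by blast
  moreover have "alpha_envy_free \<alpha> m (general_instances m n) (\<lambda>c. A (E c)) (\<lambda>c. p (E c))"
    unfolding alpha_envy_free_def
  proof (intro ballI allI impI)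
    fix c i j assume c: "c \<in> general_instances m n" and "i < m" "j < m"
    then have "\<alpha> * cost (E c) i (A (E c) i) - p (E c) i \<le> cost (E c) i (A (E c) j) - p (E c) j"
      using ef normalized[OF c] unfolding alpha_envy_free_def by simp
    then show "\<alpha> * cost c i (A (E c) i) - p (E c) i \<le> cost c i (A (E c) j) - p (E c) j"
      using restrict(3)[OF c alloc[OF c] bound[OF c]] \<open>i < m\<close> \<open>j < m\<close> by simp
  qed
  ultimately show ?thesis by blast
qed

end
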